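(* Let $(X,d)$ be a separable metric space and $p\ge1$. If $\{\mu_n\}_{n\in\mathbb{N}}$ and $\mu$ in $\mathcal{P}_{p-1}(X)$ satisfy $\mu_n\to\mu$ in $\tau_{\mathrm{w}}^{p-1}$ and $\{\varepsilon_n\}_{n\in\mathbb{N}}$ is any bounded sequence of non-negative real numbers, then there exists a $d$-bounded set $B\subseteq X$ such that $M_p(\mu_n;\varepsilon_n)\subseteq B$ for all $n\in\mathbb{N}$.
   Context: For $r\ge0$, $\mathcal{P}_r(X)$ is the set of Borel probability measures $\mu$ on $(X,d)$ with $\int_X d^r(x,y)\,d\mu(y)<\infty$ for some (equivalently all) $x\in X$; $\mu_n\to\mu$ in $\tau_{\mathrm{w}}^r$ means $\int f\,d\mu_n\to\int f\,d\mu$ for every bounded continuous $f:(X,d)\to\mathbb{R}$ and $\int d^r(x,y)\,d\mu_n(y)\to\int d^r(x,y)\,d\mu(y)$ for all $x\in X$. For $\mu\in\mathcal{P}_{p-1}(X)$, $W_p(\mu,x,x'):=\int_X(d^p(x,y)-d^p(x',y))\,d\mu(y)$ and, for $\varepsilon\ge0$, $M_p(\mu;\varepsilon):=\{x\in X: W_p(\mu,x,x')\le\varepsilon\text{ for all } x'\in X\}$. *)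

theory Defs
  imports "HOL-Analysis.Analysis" "HOL-Probability.Probability"
begin

text \<open>d^r(x,y), with the convention d^0 = 1 (note 0 powr 0 = 0 in Isabelle).\<close>
definition dpow :: "real \<Rightarrow> 'a::metric_space \<Rightarrow> 'a \<Rightarrow> real" where
  "dpow r x y = (if r = 0 then 1 else dist x y powr r)"

definition borel_prob :: "'a::metric_space measure \<Rightarrow> bool" where
  "borel_prob M \<longleftrightarrow> prob_space M \<and> sets M = sets (borel :: 'a measure)"

text \<open>P_r(X): finite r-th moment (for some, equivalently all, x).\<close>
definition Pr :: "real \<Rightarrow> 'a::metric_space measure set" where
  "Pr r = {M. borel_prob M \<and> (\<exists>x. integrable M (\<lambda>y. dpow r x y))}"

definition conv_wr :: "real \<Rightarrow> (nat \<Rightarrow> 'a::metric_space measure) \<Rightarrow> 'a measure \<Rightarrow> bool" where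
  "conv_wr r \<mu>s \<mu> \<longleftrightarrow>
     (\<forall>f :: 'a \<Rightarrow> real. continuous_on UNIV f \<and> bounded (range f) \<longrightarrow>
        (\<lambda>n. integral\<^sup>L (\<mu>s n) f) \<longlonglongrightarrow> integral\<^sup>L \<mu> f) \<and>
     (\<forall>x. (\<lambda>n. integral\<^sup>L (\<mu>s n) (\<lambda>y. dpow r x y)) \<longlonglongrightarrow> integral\<^sup>L \<mu> (\<lambda>y. dpow r x y))"

definition Wp :: "real \<Rightarrow> 'a::metric_space measure \<Rightarrow> 'a \<Rightarrow> 'a \<Rightarrow> real" where
  "Wp p \<mu> x x' = integral\<^sup>L \<mu> (\<lambda>y. dist x y powr p - dist x' y powr p)"

definition Mp :: "real \<Rightarrow> 'a::metric_space measure \<Rightarrow> real \<Rightarrow> 'a set" where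
  "Mp p \<mu> \<epsilon> = {x. \<forall>x'. Wp p \<mu> x x' \<le> \<epsilon>}"

end

theory Submission
  imports Defs "HOL-Real_Asymp.Real_Asymp"
begin

text \<open>Fix a base point \<open>x0\<close> and write \<open>R = d(x, x0)\<close>. Weak convergence yields a single radius
  \<open>r\<close> such that every \<open>\<mu>\<^sub>n\<close> gives mass at least \<open>2/3\<close> to the ball \<open>B = B(x0, r)\<close>. On \<open>B\<close> the
  integrand \<open>d(x,y)^p - d(x0,y)^p\<close> of \<open>W\<^sub>p(\<mu>\<^sub>n, x, x0)\<close> is at least \<open>(R - r)^p - r^p\<close>; off \<open>B\<close>
  the tangent line of the convex map \<open>t \<mapsto> t^p\<close> bounds it below by \<open>-p R d(x0,y)^(p-1)\<close>.
  For \<open>p > 1\<close> the \<open>(p-1)\<close>-moments about \<open>x0\<close> converge, hence are uniformly bounded, so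
  \<open>W\<^sub>p(\<mu>\<^sub>n, x, x0) \<ge> 2/3 ((R - r)^p - r^p) - O(R)\<close> uniformly in \<open>n\<close>; for \<open>p = 1\<close> the mass outside
  \<open>B\<close> is at most \<open>1/3\<close>, which still leaves growth of order \<open>R/3\<close>. Every \<open>x \<in> M\<^sub>p(\<mu>\<^sub>n; \<epsilon>\<^sub>n)\<close>
  has \<open>W\<^sub>p(\<mu>\<^sub>n, x, x0) \<le> sup \<epsilon>\<close>, so all these sets lie in one ball.\<close>

section \<open>Elementary inequalities for powers\<close>

lemma powr_diff_ge_tangent:
  fixes a b p :: real
  assumes p: "p \<ge> 1" and a: "a \<ge> 0" and b: "b \<ge> 0"
  shows "a powr p - b powr p \<ge> p * b powr (p - 1) * (a - b)"
proof (cases "a = 0 \<or> b = 0")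
  case True
  then consider "b = 0" | "a = 0" "b > 0" using b by linarith
  then show ?thesis
  proof cases
    case 2
    have "b powr p \<le> p * b powr p" using p by (simp add: mult_le_cancel_right1)
    moreover have "b powr (p - 1) * b = b powr p" using 2 by (simp add: powr_diff)
    ultimately show ?thesis using 2 by (simp add: algebra_simps)
  qed (use a in simp)
next
  case False
  then have "a > 0" "b > 0" using a b by auto
  then have "(\<lambda>x. x powr p) a - (\<lambda>x. x powr p) b \<ge> (p * b powr (p - 1)) * (a - b)"
    using powr_convex[OF p]
    by (intro convex_on_imp_above_tangent[where A="{0<..}"])
       (auto simp: interior_open intro!: derivative_eq_intros)
  then show ?thesis by simp
qed

lemma abs_powr_diff_le:
  fixes a b p :: real
  assumes p: "p \<ge> 1" and a: "a \<ge> 0" and b: "b \<ge> 0"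
  shows "\<bar>a powr p - b powr p\<bar> \<le> p * max a b powr (p - 1) * \<bar>a - b\<bar>"
proof (cases "a \<le> b")
  case True
  then have "a powr p \<le> b powr p" using a p by (simp add: powr_mono2)
  with True powr_diff_ge_tangent[OF p a b] show ?thesis by (simp add: max_def abs_if algebra_simps)
next
  case False
  then have "b powr p \<le> a powr p" using b p by (simp add: powr_mono2)
  with False powr_diff_ge_tangent[OF p b a] show ?thesis by (simp add: max_def abs_if algebra_simps)
qed

lemma powr_add_le:
  fixes s t q :: real
  assumes "s \<ge> 0" "t \<ge> 0" "q \<ge> 0"
  shows "(s + t) powr q \<le> 2 powr q * (s powr q + t powr q)"
proof -
  have "(s + t) powr q \<le> (2 * max s t) powr q"
    using assms by (intro powr_mono2) auto
  also have "\<dots> = 2 powr q * max s t powr q" using assms by (simp add: powr_mult)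
  also have "\<dots> \<le> 2 powr q * (s powr q + t powr q)" by (simp add: max_def)
  finally show ?thesis .
qed

lemma dist_powr_le_dpow: "q \<ge> 0 \<Longrightarrow> dist x y powr q \<le> dpow q x y"
  by (simp add: dpow_def)

lemma borel_prob_prob_space: "borel_prob M \<Longrightarrow> prob_space M"
  by (simp add: borel_prob_def)

lemma borel_prob_space: "borel_prob (M :: 'a::metric_space measure) \<Longrightarrow> space M = UNIV"
  using sets_eq_imp_space_eq[of M borel] by (simp add: borel_prob_def)

lemma borel_prob_sets:
  "borel_prob (M :: 'a::metric_space measure) \<Longrightarrow> A \<in> sets borel \<Longrightarrow> A \<in> sets M"
  by (simp add: borel_prob_def)

lemma borel_prob_measurable:
  fixes f :: "'a::metric_space \<Rightarrow> real"
  assumes "borel_prob M" "f \<in> borel_measurable borel"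
  shows "f \<in> borel_measurable M"
proof -
  have "borel_measurable M = (borel_measurable borel :: ('a \<Rightarrow> real) set)"
    using assms(1) by (intro measurable_cong_sets) (auto simp: borel_prob_def)
  with assms(2) show ?thesis by simp
qed

lemma measure_cball_tendsto_1:
  fixes x0 :: "'a::metric_space"
  assumes "borel_prob M"
  shows "(\<lambda>k. measure M (cball x0 (real k))) \<longlonglongrightarrow> 1"
proof -
  interpret prob_space M using assms by (rule borel_prob_prob_space)
  have "(\<lambda>k. measure M (cball x0 (real k))) \<longlonglongrightarrow> measure M (\<Union>k. cball x0 (real k))"
    using assms by (intro finite_Lim_measure_incseq) (auto simp: borel_prob_sets incseq_def subset_cball)
  moreover have "(\<Union>k. cball x0 (real k)) = space M"
    using borel_prob_space[OF assms] by (auto simp: mem_cball intro: real_arch_simple)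
  ultimately show ?thesis by (simp add: prob_space)
qed

lemma ex_measure_cball_gt:
  fixes x0 :: "'a::metric_space"
  assumes "borel_prob M" "c < 1"
  shows "\<exists>r\<ge>0. c < measure M (cball x0 r)"
proof -
  obtain k where "c < measure M (cball x0 (real k))"
    using order_tendstoD(1)[OF measure_cball_tendsto_1[OF assms(1)] assms(2)]
    by (auto simp: eventually_sequentially)
  then show ?thesis by (intro exI[of _ "real k"]) auto
qed

text \<open>A portmanteau-type estimate: test against a continuous cut-off between the two balls.\<close>

lemma eventually_measure_cball_gt:
  fixes x0 :: "'a::metric_space"
  assumes bps: "\<And>n. borel_prob (\<mu>s n)" and bp: "borel_prob \<mu>"
    and weak: "\<And>f::'a \<Rightarrow> real. continuous_on UNIV f \<Longrightarrow> bounded (range f) \<Longrightarrow>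
                 (\<lambda>n. integral\<^sup>L (\<mu>s n) f) \<longlonglongrightarrow> integral\<^sup>L \<mu> f"
    and c: "c < measure \<mu> (cball x0 r)"
  shows "eventually (\<lambda>n. c < measure (\<mu>s n) (cball x0 (r + 1))) sequentially"
proof -
  define \<phi> where "\<phi> y = max 0 (min 1 (r + 1 - dist x0 y))" for y
  have cont: "continuous_on UNIV \<phi>" unfolding \<phi>_def by (intro continuous_intros)
  have "bounded (range \<phi>)" unfolding \<phi>_def bounded_iff by (intro exI[of _ 1]) auto
  have ind_le: "indicator (cball x0 r) y \<le> \<phi> y" "\<phi> y \<le> indicator (cball x0 (r + 1)) y" for y
    unfolding \<phi>_def by (auto simp: indicator_def mem_cball)
  have integrable: "integrable M \<phi>" "integrable M (indicator (cball x0 s) :: 'a \<Rightarrow> real)"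
    if "borel_prob M" for M s
  proof -
    interpret prob_space M using that by (rule borel_prob_prob_space)
    show "integrable M \<phi>"
      using cont by (intro integrable_const_bound[where B=1])
                    (auto simp: \<phi>_def borel_prob_measurable[OF that] borel_measurable_continuous_onI)
    show "integrable M (indicator (cball x0 s) :: 'a \<Rightarrow> real)"
      using that by (intro integrable_real_indicator) (auto simp: borel_prob_sets less_top[symmetric])
  qed
  have "measure \<mu> (cball x0 r) \<le> integral\<^sup>L \<mu> \<phi>"
    using integral_mono[OF integrable(2,1)[OF bp] ind_le(1)] borel_prob_space[OF bp] by simp
  with c have "eventually (\<lambda>n. c < integral\<^sup>L (\<mu>s n) \<phi>) sequentially"
    by (intro order_tendstoD(1)[OF weak[OF cont \<open>bounded (range \<phi>)\<close>]]) simp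
  moreover have "integral\<^sup>L (\<mu>s n) \<phi> \<le> measure (\<mu>s n) (cball x0 (r + 1))" for n
    using integral_mono[OF integrable[OF bps] ind_le(2)] borel_prob_space[OF bps] by simp
  ultimately show ?thesis by (auto elim!: eventually_mono intro: less_le_trans)
qed

lemma ex_uniform_bound_if_eventually:
  fixes P :: "nat \<Rightarrow> real \<Rightarrow> bool"
  assumes ex: "\<And>n. \<exists>r. P n r" and mono: "\<And>n r s. P n r \<Longrightarrow> r \<le> s \<Longrightarrow> P n s"
    and ev: "eventually (\<lambda>n. P n r0) sequentially"
  shows "\<exists>r. \<forall>n. P n r"
proof -
  obtain N where N: "\<And>n. n \<ge> N \<Longrightarrow> P n r0" using ev by (auto simp: eventually_sequentially)
  obtain rr where rr: "\<And>n. P n (rr n)" using ex by metis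
  have "P n (max r0 (Max (rr ` {..<N})))" for n
  proof (cases "n \<ge> N")
    case True
    then show ?thesis using N mono by fastforce
  next
    case False
    then have "rr n \<le> Max (rr ` {..<N})" by (intro Max_ge) auto
    then show ?thesis using mono[OF rr] by (simp add: le_max_iff_disj)
  qed
  then show ?thesis by blast
qed

lemma uniform_measure_cball_ge:
  fixes x0 :: "'a::metric_space"
  assumes bps: "\<And>n. borel_prob (\<mu>s n)" and bp: "borel_prob \<mu>"
    and weak: "\<And>f::'a \<Rightarrow> real. continuous_on UNIV f \<Longrightarrow> bounded (range f) \<Longrightarrow>
                 (\<lambda>n. integral\<^sup>L (\<mu>s n) f) \<longlonglongrightarrow> integral\<^sup>L \<mu> f"
    and c: "c < 1"
  shows "\<exists>r\<ge>0. \<forall>n. c \<le> measure (\<mu>s n) (cball x0 r)"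
proof -
  have mono: "c \<le> measure (\<mu>s n) (cball x0 s)"
    if "c \<le> measure (\<mu>s n) (cball x0 r)" "r \<le> s" for n r s
  proof -
    interpret prob_space "\<mu>s n" using bps by (rule borel_prob_prob_space)
    have "measure (\<mu>s n) (cball x0 r) \<le> measure (\<mu>s n) (cball x0 s)"
      using that(2) by (intro finite_measure_mono) (auto simp: subset_cball borel_prob_sets[OF bps])
    with that(1) show ?thesis by linarith
  qed
  obtain r where "c < measure \<mu> (cball x0 r)" using ex_measure_cball_gt[OF bp c] by blast
  then have "eventually (\<lambda>n. c \<le> measure (\<mu>s n) (cball x0 (r + 1))) sequentially"
    by (auto intro: eventually_mono[OF eventually_measure_cball_gt[OF bps bp weak]])
  moreover have "\<exists>r. c \<le> measure (\<mu>s n) (cball x0 r)" for n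
    using ex_measure_cball_gt[OF bps c, of n x0] by (auto intro: less_imp_le)
  ultimately obtain R where "\<And>n. c \<le> measure (\<mu>s n) (cball x0 R)"
    using ex_uniform_bound_if_eventually[of "\<lambda>n r. c \<le> measure (\<mu>s n) (cball x0 r)"] mono
    by blast
  then show ?thesis using mono[of _ R "max 0 R"] by (intro exI[of _ "max 0 R"]) simp
qed

lemma borel_measurable_dist_powr: "(\<lambda>y. dist x0 y powr q) \<in> borel_measurable borel"
  by (intro powr_real_measurable borel_measurable_continuous_onI continuous_intros borel_measurable_const)

lemma integrable_dist_powr_Pr:
  fixes x0 :: "'a::metric_space"
  assumes "N \<in> Pr q" "q \<ge> 0"
  shows "integrable N (\<lambda>y. dist x0 y powr q)"
proof -
  obtain x1 where N: "borel_prob N" and I: "integrable N (dpow q x1)"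
    using assms(1) by (auto simp: Pr_def)
  define g where "g y = 2 powr q * (dpow q x1 y + dist x0 x1 powr q)" for y
  have le: "dist x0 y powr q \<le> g y" for y
  proof -
    have "dist x0 y powr q \<le> (dist x1 y + dist x0 x1) powr q"
      using assms(2) dist_triangle[of x0 y x1] by (intro powr_mono2) (auto simp: dist_commute)
    also have "\<dots> \<le> 2 powr q * (dist x1 y powr q + dist x0 x1 powr q)"
      using assms(2) by (intro powr_add_le) auto
    also have "\<dots> \<le> g y"
      unfolding g_def using dist_powr_le_dpow[OF assms(2)] by (intro mult_left_mono) auto
    finally show ?thesis .
  qed
  have "integrable N g"
  proof -
    interpret prob_space N using N by (rule borel_prob_prob_space)
    show ?thesis unfolding g_def using I by simp
  qed
  then show ?thesis
  proof (rule Bochner_Integration.integrable_bound)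
    show "(\<lambda>y. dist x0 y powr q) \<in> borel_measurable N"
      using borel_prob_measurable[OF N borel_measurable_dist_powr] .
    have "norm (dist x0 y powr q) \<le> norm (g y)" for y
      using le[of y] by (simp add: abs_le_iff)
    then show "AE y in N. norm (dist x0 y powr q) \<le> norm (g y)" by simp
  qed
qed

lemma integrable_dpow_Pr:
  assumes "N \<in> Pr q" "q \<ge> 0"
  shows "integrable N (dpow q x0)"
proof (cases "q = 0")
  case True
  interpret prob_space N using assms(1) by (simp add: Pr_def borel_prob_def)
  show ?thesis using True by (simp add: dpow_def[abs_def])
next
  case False
  then show ?thesis using integrable_dist_powr_Pr[OF assms] by (simp add: dpow_def[abs_def])
qed

lemma uniform_moment_bound:
  fixes x0 :: "'a::metric_space"
  assumes conv: "conv_wr q \<mu>s \<mu>" and Pr: "\<And>n. \<mu>s n \<in> Pr q" and q: "q \<ge> 0"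
  shows "\<exists>M. \<forall>n. (\<integral>y. dist x0 y powr q \<partial>\<mu>s n) \<le> M"
proof -
  have "(\<lambda>n. integral\<^sup>L (\<mu>s n) (dpow q x0)) \<longlonglongrightarrow> integral\<^sup>L \<mu> (dpow q x0)"
    using conv unfolding conv_wr_def by blast
  then have "Bseq (\<lambda>n. integral\<^sup>L (\<mu>s n) (dpow q x0))"
    by (rule convergent_imp_Bseq[OF convergentI])
  then obtain M where M: "\<And>n. norm (integral\<^sup>L (\<mu>s n) (dpow q x0)) \<le> M"
    unfolding Bseq_def by blast
  have "(\<integral>y. dist x0 y powr q \<partial>\<mu>s n) \<le> integral\<^sup>L (\<mu>s n) (dpow q x0)" for n
    using integral_mono[OF integrable_dist_powr_Pr[OF Pr q] integrable_dpow_Pr[OF Pr q]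
          dist_powr_le_dpow[OF q]] .
  moreover have "integral\<^sup>L (\<mu>s n) (dpow q x0) \<le> M" for n
    using M[of n] by (simp add: abs_le_iff)
  ultimately have "(\<integral>y. dist x0 y powr q \<partial>\<mu>s n) \<le> M" for n
    using order_trans by blast
  then show ?thesis by blast
qed

section \<open>Coercivity of \<open>Wp\<close>\<close>

lemma integrable_Wp_integrand:
  fixes x x0 :: "'a::metric_space"
  assumes N: "borel_prob N" and p: "p \<ge> 1" and I: "integrable N (\<lambda>y. dist x0 y powr (p - 1))"
  shows "integrable N (\<lambda>y. dist x y powr p - dist x0 y powr p)"
proof -
  define R where "R = dist x x0"
  define g where "g y = p * R * 2 powr (p - 1) * (dist x0 y powr (p - 1) + R powr (p - 1))" for y
  have le: "\<bar>dist x y powr p - dist x0 y powr p\<bar> \<le> g y" for y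
  proof -
    have dd: "\<bar>dist x y - dist x0 y\<bar> \<le> R"
      using abs_dist_diff_le[of x y x0] by (simp add: R_def dist_commute)
    have "\<bar>dist x y powr p - dist x0 y powr p\<bar>
            \<le> p * max (dist x y) (dist x0 y) powr (p - 1) * \<bar>dist x y - dist x0 y\<bar>"
      using p by (intro abs_powr_diff_le) auto
    also have "\<dots> \<le> p * (dist x0 y + R) powr (p - 1) * R"
      using p dd by (intro mult_mono powr_mono2) (auto simp: le_max_iff_disj)
    also have "\<dots> \<le> p * (2 powr (p - 1) * (dist x0 y powr (p - 1) + R powr (p - 1))) * R"
      using p by (intro mult_mono powr_add_le) (auto simp: R_def)
    finally show ?thesis by (simp add: g_def algebra_simps)
  qed
  have "integrable N g"
  proof -
    interpret prob_space N using N by (rule borel_prob_prob_space)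
    show ?thesis unfolding g_def using I by simp
  qed
  then show ?thesis
  proof (rule Bochner_Integration.integrable_bound)
    show "(\<lambda>y. dist x y powr p - dist x0 y powr p) \<in> borel_measurable N"
      using borel_prob_measurable[OF N borel_measurable_dist_powr] by simp
    show "AE y in N. norm (dist x y powr p - dist x0 y powr p) \<le> norm (g y)"
      using order_trans[OF le abs_ge_self] by (intro AE_I2) simp
  qed
qed

lemma Wp_ge_ball_mass:
  fixes x x0 :: "'a::metric_space"
  assumes N: "borel_prob N" and p: "p \<ge> 1" and r: "0 \<le> r" "r \<le> dist x x0"
    and I: "integrable N (\<lambda>y. dist x0 y powr (p - 1))"
  shows "measure N (cball x0 r) * ((dist x x0 - r) powr p - r powr p)
           - p * dist x x0 * (\<integral>y. dist x0 y powr (p - 1) * indicator (- cball x0 r) y \<partial>N)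
         \<le> Wp p N x x0"
proof -
  interpret prob_space N using N by (rule borel_prob_prob_space)
  define R where "R = dist x x0"
  define B where "B = cball x0 r"
  txt \<open>A pointwise minorant of the integrand of \<open>Wp\<close>: on \<open>B\<close> by the triangle inequality,
    off \<open>B\<close> by the tangent line of \<open>t powr p\<close> at \<open>dist x0 y\<close>.\<close>
  define tail where "tail y = dist x0 y powr (p - 1) * indicator (- B) y" for y
  define l where "l y = ((R - r) powr p - r powr p) * indicator B y - p * R * tail y" for y
  have l_le: "l y \<le> dist x y powr p - dist x0 y powr p" for y
  proof (cases "y \<in> B")
    case True
    then have "dist x0 y \<le> r" by (simp add: B_def)
    moreover have "R - dist x0 y \<le> dist x y"
      using dist_triangle[of x x0 y] by (simp add: R_def dist_commute)
    ultimately have "(R - r) powr p \<le> dist x y powr p" "dist x0 y powr p \<le> r powr p"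
      using p r by (auto intro!: powr_mono2 simp: R_def)
    then show ?thesis using True by (simp add: l_def tail_def)
  next
    case False
    have "- R \<le> dist x y - dist x0 y"
      using abs_dist_diff_le[of x y x0] by (auto simp: R_def dist_commute abs_le_iff)
    then have "p * dist x0 y powr (p - 1) * (- R) \<le> p * dist x0 y powr (p - 1) * (dist x y - dist x0 y)"
      using p by (intro mult_left_mono) auto
    with powr_diff_ge_tangent[OF p, of "dist x y" "dist x0 y"] show ?thesis
      using False by (simp add: l_def tail_def algebra_simps)
  qed
  have B: "B \<in> sets N" "- B \<in> sets N"
    unfolding B_def using N by (auto intro: borel_prob_sets borel_closed borel_open)
  have tail: "integrable N tail"
    unfolding tail_def using B(2) I by (rule integrable_real_mult_indicator)
  have "integrable N (indicator B :: 'a \<Rightarrow> real)"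
    using B(1) by (simp add: less_top[symmetric])
  then have l: "integrable N l"
    unfolding l_def using tail by simp
  have "integral\<^sup>L N l \<le> Wp p N x x0"
    unfolding Wp_def by (rule integral_mono[OF l integrable_Wp_integrand[OF N p I] l_le])
  moreover have "integral\<^sup>L N l = ((R - r) powr p - r powr p) * measure N B - p * R * integral\<^sup>L N tail"
    unfolding l_def using B tail borel_prob_space[OF N]
    by (subst Bochner_Integration.integral_diff) (auto simp: less_top[symmetric])
  ultimately show ?thesis by (simp add: R_def B_def tail_def[abs_def] mult_ac)
qed

lemma integral_powr_0_outside_cball_le:
  fixes x0 :: "'a::metric_space"
  assumes N: "borel_prob N"
  shows "(\<integral>y. dist x0 y powr 0 * indicator (- cball x0 r) y \<partial>N) \<le> 1 - measure N (cball x0 r)"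
proof -
  interpret prob_space N using N by (rule borel_prob_prob_space)
  have B: "cball x0 r \<in> sets N" "- cball x0 r \<in> sets N"
    using N by (auto intro: borel_prob_sets borel_closed borel_open)
  have "(\<integral>y. dist x0 y powr 0 * indicator (- cball x0 r) y \<partial>N)
          \<le> (\<integral>y. indicator (- cball x0 r) y \<partial>N)"
    using B(2) by (intro integral_mono') (auto simp: less_top[symmetric] split: split_indicator)
  also have "\<dots> = 1 - measure N (cball x0 r)"
    using prob_compl[OF B(1)] borel_prob_space[OF N] by (simp add: Compl_eq_Diff_UNIV)
  finally show ?thesis .
qed

text \<open>For \<open>p = 1\<close> the moment bound is useless, as it need not be below the mass \<open>c\<close> of the
  ball; there the tail is bounded by the mass \<open>1 - c\<close> outside the ball instead.\<close>

lemma uniform_tail_bound: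
  fixes \<mu>s :: "nat \<Rightarrow> 'a::metric_space measure" and x0 :: 'a
  assumes p: "p \<ge> 1" and Pr: "\<And>n. \<mu>s n \<in> Pr (p - 1)" and conv: "conv_wr (p - 1) \<mu>s \<mu>"
    and mass: "\<And>n. c \<le> measure (\<mu>s n) (cball x0 r)" and c: "c > 1/2"
  shows "\<exists>T. (\<forall>n. (\<integral>y. dist x0 y powr (p - 1) * indicator (- cball x0 r) y \<partial>\<mu>s n) \<le> T)
             \<and> (p = 1 \<longrightarrow> T < c)"
proof (cases "p = 1")
  case True
  have "(\<integral>y. dist x0 y powr (p - 1) * indicator (- cball x0 r) y \<partial>\<mu>s n) \<le> 1 - c" for n
    using integral_powr_0_outside_cball_le[of "\<mu>s n" x0 r] Pr[of n] mass[of n] True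
    by (simp add: Pr_def)
  with c show ?thesis by (intro exI[of _ "1 - c"]) auto
next
  case False
  obtain M where M: "\<And>n. (\<integral>y. dist x0 y powr (p - 1) \<partial>\<mu>s n) \<le> M"
    using uniform_moment_bound[OF conv Pr] p by auto
  have "(\<integral>y. dist x0 y powr (p - 1) * indicator (- cball x0 r) y \<partial>\<mu>s n) \<le> M" for n
    using integrable_dist_powr_Pr[OF Pr[of n]] p
    by (intro order_trans[OF integral_mono' M]) (auto split: split_indicator)
  with False show ?thesis by blast
qed

lemma Wp_lower_bound_tendsto_at_top:
  fixes c p r T :: real
  assumes c: "c > 0" and p: "p \<ge> 1" and T: "p = 1 \<Longrightarrow> T < c"
  shows "filterlim (\<lambda>R. c * ((R - r) powr p - r powr p) - p * R * T) at_top at_top"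
proof (cases "p = 1")
  case True
  have "T < c" using T[OF True] .
  then show ?thesis unfolding True by real_asymp
next
  case False
  then have "p > 1" using p by simp
  with c show ?thesis by real_asymp
qed

lemma Wp_uniformly_coercive:
  fixes \<mu>s :: "nat \<Rightarrow> 'a::metric_space measure" and x0 :: 'a
  assumes p: "p \<ge> 1" and Pr: "\<And>n. \<mu>s n \<in> Pr (p - 1)" "\<mu> \<in> Pr (p - 1)"
    and conv: "conv_wr (p - 1) \<mu>s \<mu>"
  shows "\<exists>R. \<forall>n x. R \<le> dist x x0 \<longrightarrow> K < Wp p (\<mu>s n) x x0"
proof -
  have bps: "\<And>n. borel_prob (\<mu>s n)" and bp: "borel_prob \<mu>" using Pr by (auto simp: Pr_def)
  have I: "\<And>n. integrable (\<mu>s n) (\<lambda>y. dist x0 y powr (p - 1))"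
    using integrable_dist_powr_Pr[OF Pr(1)] p by simp
  have weak: "\<And>f :: 'a \<Rightarrow> real. continuous_on UNIV f \<Longrightarrow> bounded (range f) \<Longrightarrow>
                 (\<lambda>n. integral\<^sup>L (\<mu>s n) f) \<longlonglongrightarrow> integral\<^sup>L \<mu> f"
    using conv by (auto simp: conv_wr_def)
  obtain r where r: "r \<ge> 0" "\<And>n. 2/3 \<le> measure (\<mu>s n) (cball x0 r)"
    using uniform_measure_cball_ge[OF bps bp weak, where c="2/3"] by auto
  define tail where
    "tail n = (\<integral>y. dist x0 y powr (p - 1) * indicator (- cball x0 r) y \<partial>\<mu>s n)" for n
  obtain T where T: "\<And>n. tail n \<le> T" and T1: "p = 1 \<Longrightarrow> T < 2/3"
    using uniform_tail_bound[OF p Pr(1) conv r(2)] unfolding tail_def by force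
  obtain R0 where R0: "\<And>R. R0 \<le> R \<Longrightarrow> K < 2/3 * ((R - r) powr p - r powr p) - p * R * T"
    using Wp_lower_bound_tendsto_at_top[of "2/3" p T r] p T1
    by (auto simp: filterlim_at_top_dense eventually_at_top_linorder)
  have "K < Wp p (\<mu>s n) x x0" if x: "max (2 * r) R0 \<le> dist x x0" for n x
  proof -
    define R where "R = dist x x0"
    have h: "0 \<le> (R - r) powr p - r powr p"
      using x r p by (auto intro!: powr_mono2 simp: R_def)
    have "K < 2/3 * ((R - r) powr p - r powr p) - p * R * T"
      using R0 x by (simp add: R_def)
    also have "\<dots> \<le> measure (\<mu>s n) (cball x0 r) * ((R - r) powr p - r powr p) - p * R * tail n"
      using r(2)[of n] T[of n] h p by (intro diff_mono mult_right_mono mult_left_mono) (auto simp: R_def)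
    also have "\<dots> \<le> Wp p (\<mu>s n) x x0"
      using Wp_ge_ball_mass[OF bps p r(1) _ I, where x=x] x r(1) by (simp add: R_def tail_def)
    finally show ?thesis .
  qed
  then show ?thesis by blast
qed

theorem lemma3p6:
  fixes \<mu>s :: "nat \<Rightarrow> 'a::metric_space measure" and \<mu> :: "'a measure"
    and p :: real and \<epsilon> :: "nat \<Rightarrow> real"
  assumes "separable_space (euclidean :: 'a topology)"
    and "p \<ge> 1"
    and "\<And>n. \<mu>s n \<in> Pr (p - 1)" and "\<mu> \<in> Pr (p - 1)"
    and "conv_wr (p - 1) \<mu>s \<mu>"
    and "\<And>n. \<epsilon> n \<ge> 0" and "bounded (range \<epsilon>)"
  shows "\<exists>B. bounded B \<and> (\<forall>n. Mp p (\<mu>s n) (\<epsilon> n) \<subseteq> B)"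
proof -
  fix x0 :: 'a
  obtain K where K: "\<And>n. \<epsilon> n \<le> K"
    using assms(7) by (auto simp: bounded_iff abs_le_iff)
  obtain R where R: "\<And>n x. R \<le> dist x x0 \<Longrightarrow> K < Wp p (\<mu>s n) x x0"
    using Wp_uniformly_coercive[OF assms(2-5)] by blast
  have "Mp p (\<mu>s n) (\<epsilon> n) \<subseteq> ball x0 R" for n
  proof
    fix x assume "x \<in> Mp p (\<mu>s n) (\<epsilon> n)"
    then have "Wp p (\<mu>s n) x x0 \<le> \<epsilon> n" by (simp add: Mp_def)
    then show "x \<in> ball x0 R" using K[of n] R[of x n] by (fastforce simp: dist_commute)
  qed
  then show ?thesis by blast
qed

end
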